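(* There exists an instance of the throughput-constrained online resource allocation problem (a fixed choice of all primitives, with the horizon $T$ ranging over multiples of $K$) such that every online policy $\pi$ that has myopic vanishing regret satisfies $\mathbb E[\textsc{Reg}]=\mathbb E[V^\pi[\omega]-V^{\textsc{off}}[\omega]]=\Omega(T)$.
   Context: Model. There are $m$ resources and $n$ arrival types. Type $j\in[n]$ has an assignment cost vector $c_j\in\mathbb R^m$ and a set $\mathcal S_j\subseteq[m]$ of allowed resources; $\max_{i,j}|c_{ji}|<\infty$. The horizon has $T$ periods, partitioned into $K=\Theta(1)$ epochs, $T$ a multiple of $K$; epoch $k$ consists of the periods $\mathcal T_k=\{(k-1)T/K+1,\dots,kT/K\}$. In each period $t$ one arrival of type $j^t$ occurs, $j^1,\dots,j^T$ i.i.d. with $\mathbb P(j^t=j)=p_j$ ($p$ not scaling with $T$, unknown to the decision-maker). Write $\omega=(j^t)_{t\le T}$, $\omega_k=(j^t)_{t\in\mathcal T_k}$, $\Lambda_j(t_1:t_2)=\sum_{t_1<\tau\le t_2}\mathbf 1\{j^\tau=j\}$. In period $t$ the decision-maker observes $j^t$ and either rejects the arrival (cost $0$) or assigns it to one resource $i\in\mathcal S_{j^t}$ (cost $c_{j^ti}$). For a policy $\pi$, $Z^\pi_{ji}(t)$ counts type-$j$ arrivals assigned to $i$ in periods $1..t$, $Z^\pi_i=\sum_jZ^\pi_{ji}$, $Z(t_1:t_2)=Z(t_2)-Z(t_1)$. Each epoch $k$ and resource $i$ has a target $\rho_{ki}\in[0,1]$ and a convex $L$-Lipschitz deviation cost $g_{ki}:[0,1]\to\mathbb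 R_{\ge0}$ with $g_{ki}(\rho_{ki})=0$. The cost of $\pi$ is $V^\pi[\omega]=\sum_{j,i}c_{ji}Z^\pi_{ji}(T)+\frac TK\sum_{k\in[K]}\sum_{i}k\,g_{ki}\big(Z^\pi_i(kT/K)/(kT/K)\big)$; $V^{\textsc{off}}[\omega]$ is the minimum of this expression over nonnegative integer assignments satisfying $\sum_iZ_{ji}((k-1)T/K:kT/K)\le\Lambda_j((k-1)T/K:kT/K)$ for all $j,k$ and $Z_{ji}(T)=0$ for $i\notin\mathcal S_j$. Myopic notions. For epoch $k$ and current aggregate consumption $z\in\mathbb N^m$, the myopic offline optimum $V^{\textsc{myo-off}}_k[\omega_k\mid z]$ is the minimum, over nonnegative integers $Z_{ji}((k-1)T/K:kT/K)$ with $\sum_iZ_{ji}((k-1)T/K:kT/K)\le\Lambda_j((k-1)T/K:kT/K)$ and $Z_{ji}=0$ for $i\notin\mathcal S_j$, of $$\sum_{j,i}c_{ji}Z_{ji}\big(\tfrac{(k-1)T}K:\tfrac{kT}K\big)+\frac{kT}K\sum_ig_{ki}\Big(\frac{z_i+Z_i((k-1)T/K:kT/K)}{kT/K}\Big).$$ For a policy $\pi$, $V^\pi_k[\omega_k\mid z]$ denotes the quantity in the last display evaluated at $\pi$'s own assignments in epoch $k$ with $z=Z^\pi((k-1)T/K)$ (the assignment and epoch-$k$ deviation costs incurred during epoch $k$). A policy $\pi$ has myopic vanishing regret if there is $\alpha\in[0,1)$ such that for all $k\in[K]$ and all values of $Z^\pi((k-1)T/K)\in\mathbb N^m$, $\mathbb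 E\big[V^\pi_k[\omega_k\mid Z^\pi((k-1)T/K)]-V^{\textsc{myo-off}}_k[\omega_k\mid Z^\pi((k-1)T/K)]\ \big|\ Z^\pi((k-1)T/K)\big]=O(T^\alpha)$. *)

theory Defs
  imports "HOL-Probability.Probability"
begin

text \<open>Resources are the naturals i < m, arrival types the naturals j < n,
 periods are 1..T, epochs are k = 1..K, and e = T div K is the epoch length.
 An arrival sequence is omega :: nat => nat (omega t = type arriving in period t).
 An action sequence a :: nat => nat option gives, per period, None (reject) or Some i.\<close>

definition Zres :: "(nat \<Rightarrow> nat option) \<Rightarrow> nat \<Rightarrow> nat \<Rightarrow> nat" where
  "Zres a i t = card {\<tau> \<in> {1..t}. a \<tau> = Some i}"

definition Lam :: "(nat \<Rightarrow> nat) \<Rightarrow> nat \<Rightarrow> nat \<Rightarrow> nat \<Rightarrow> nat" where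
  "Lam \<omega> j t1 t2 = card {\<tau> \<in> {t1<..t2}. \<omega> \<tau> = j}"

definition acost :: "(nat \<Rightarrow> nat \<Rightarrow> real) \<Rightarrow> (nat \<Rightarrow> nat) \<Rightarrow> (nat \<Rightarrow> nat option) \<Rightarrow> nat \<Rightarrow> nat \<Rightarrow> real" where
  "acost c \<omega> a t1 t2 = (\<Sum>\<tau>\<in>{t1<..t2}. (case a \<tau> of None \<Rightarrow> 0 | Some i \<Rightarrow> c (\<omega> \<tau>) i))"

definition Vpol :: "nat \<Rightarrow> (nat \<Rightarrow> nat \<Rightarrow> real) \<Rightarrow> (nat \<Rightarrow> nat \<Rightarrow> real \<Rightarrow> real) \<Rightarrow> nat \<Rightarrow> nat
     \<Rightarrow> (nat \<Rightarrow> nat) \<Rightarrow> (nat \<Rightarrow> nat option) \<Rightarrow> real" where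
  "Vpol m c g K T \<omega> a =
     acost c \<omega> a 0 T
     + real T / real K * (\<Sum>k\<in>{1..K}. \<Sum>i<m. real k *
          g k i (real (Zres a i (k * (T div K))) / real (k * (T div K))))"

text \<open>Feasible offline assignments: y k j i = number of type-j arrivals of epoch k assigned to i.\<close>
definition off_feasible :: "nat \<Rightarrow> nat \<Rightarrow> (nat \<Rightarrow> nat set) \<Rightarrow> nat \<Rightarrow> nat \<Rightarrow> (nat \<Rightarrow> nat)
     \<Rightarrow> (nat \<Rightarrow> nat \<Rightarrow> nat \<Rightarrow> nat) set" where
  "off_feasible m n S K T \<omega> =
     {y. (\<forall>k j i. y k j i \<noteq> 0 \<longrightarrow> k \<in> {1..K} \<and> j < n \<and> i < m \<and> i \<in> S j) \<and>
         (\<forall>k\<in>{1..K}. \<forall>j<n. (\<Sum>i<m. y k j i) \<le> Lam \<omega> j ((k - 1) * (T div K)) (k * (T div K)))}"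

definition off_cost :: "nat \<Rightarrow> nat \<Rightarrow> (nat \<Rightarrow> nat \<Rightarrow> real) \<Rightarrow> (nat \<Rightarrow> nat \<Rightarrow> real \<Rightarrow> real) \<Rightarrow> nat \<Rightarrow> nat
     \<Rightarrow> (nat \<Rightarrow> nat \<Rightarrow> nat \<Rightarrow> nat) \<Rightarrow> real" where
  "off_cost m n c g K T y =
     (\<Sum>k\<in>{1..K}. \<Sum>j<n. \<Sum>i<m. c j i * real (y k j i))
     + real T / real K * (\<Sum>k\<in>{1..K}. \<Sum>i<m. real k *
          g k i (real (\<Sum>k'\<in>{1..k}. \<Sum>j<n. y k' j i) / real (k * (T div K))))"

definition Voff :: "nat \<Rightarrow> nat \<Rightarrow> (nat \<Rightarrow> nat \<Rightarrow> real) \<Rightarrow> (nat \<Rightarrow> nat set) \<Rightarrow> (nat \<Rightarrow> nat \<Rightarrow> real \<Rightarrow> real)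
     \<Rightarrow> nat \<Rightarrow> nat \<Rightarrow> (nat \<Rightarrow> nat) \<Rightarrow> real" where
  "Voff m n c S g K T \<omega> = Min (off_cost m n c g K T ` off_feasible m n S K T \<omega>)"

definition Vmyo :: "nat \<Rightarrow> nat \<Rightarrow> (nat \<Rightarrow> nat \<Rightarrow> real) \<Rightarrow> (nat \<Rightarrow> nat set) \<Rightarrow> (nat \<Rightarrow> nat \<Rightarrow> real \<Rightarrow> real)
     \<Rightarrow> nat \<Rightarrow> nat \<Rightarrow> nat \<Rightarrow> (nat \<Rightarrow> nat) \<Rightarrow> (nat \<Rightarrow> nat) \<Rightarrow> real" where
  "Vmyo m n c S g K T k \<omega> z =
     Min ((\<lambda>y. (\<Sum>j<n. \<Sum>i<m. c j i * real (y j i))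
              + real (k * (T div K)) * (\<Sum>i<m.
                   g k i ((real (z i) + real (\<Sum>j<n. y j i)) / real (k * (T div K)))))
          ` {y. (\<forall>j i. y j i \<noteq> 0 \<longrightarrow> j < n \<and> i < m \<and> i \<in> S j) \<and>
                (\<forall>j<n. (\<Sum>i<m. y j i) \<le> Lam \<omega> j ((k - 1) * (T div K)) (k * (T div K)))})"

definition Vpol_epoch :: "nat \<Rightarrow> (nat \<Rightarrow> nat \<Rightarrow> real) \<Rightarrow> (nat \<Rightarrow> nat \<Rightarrow> real \<Rightarrow> real) \<Rightarrow> nat \<Rightarrow> nat \<Rightarrow> nat
     \<Rightarrow> (nat \<Rightarrow> nat) \<Rightarrow> (nat \<Rightarrow> nat option) \<Rightarrow> real" where
  "Vpol_epoch m c g K T k \<omega> a =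
     acost c \<omega> a ((k - 1) * (T div K)) (k * (T div K))
     + real (k * (T div K)) * (\<Sum>i<m. g k i (real (Zres a i (k * (T div K))) / real (k * (T div K))))"

definition valid_instance :: "nat \<Rightarrow> nat \<Rightarrow> (nat \<Rightarrow> nat \<Rightarrow> real) \<Rightarrow> (nat \<Rightarrow> nat set) \<Rightarrow> nat \<Rightarrow> nat pmf
     \<Rightarrow> (nat \<Rightarrow> nat \<Rightarrow> real) \<Rightarrow> (nat \<Rightarrow> nat \<Rightarrow> real \<Rightarrow> real) \<Rightarrow> real \<Rightarrow> bool" where
  "valid_instance m n c S K p \<rho> g L \<longleftrightarrow>
     K \<ge> 1 \<and> set_pmf p \<subseteq> {..<n} \<and> (\<forall>j<n. S j \<subseteq> {..<m}) \<and> L \<ge> 0 \<and>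
     (\<forall>k\<in>{1..K}. \<forall>i<m.
        \<rho> k i \<in> {0..1} \<and> convex_on {0..1} (g k i) \<and> L-lipschitz_on {0..1} (g k i) \<and>
        (\<forall>x\<in>{0..1}. g k i x \<ge> 0) \<and> g k i (\<rho> k i) = 0)"

definition arrivals :: "nat pmf \<Rightarrow> nat \<Rightarrow> (nat \<Rightarrow> nat) pmf" where
  "arrivals p T = Pi_pmf {1..T} 0 (\<lambda>_. p)"

text \<open>Online policy (possibly randomized): for each horizon T, a seed r is drawn from R T,
 independent of the arrivals, and pol T r omega t is the decision in period t.\<close>
definition online_policy :: "(nat \<Rightarrow> nat set) \<Rightarrow> (nat \<Rightarrow> nat \<Rightarrow> (nat \<Rightarrow> nat) \<Rightarrow> nat \<Rightarrow> nat option) \<Rightarrow> bool" where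
  "online_policy S pol \<longleftrightarrow>
     (\<forall>T r \<omega> \<omega>' t. t \<in> {1..T} \<longrightarrow> (\<forall>\<tau>\<in>{1..t}. \<omega> \<tau> = \<omega>' \<tau>) \<longrightarrow> pol T r \<omega> t = pol T r \<omega>' t) \<and>
     (\<forall>T r \<omega> t i. t \<in> {1..T} \<longrightarrow> pol T r \<omega> t = Some i \<longrightarrow> i \<in> S (\<omega> t))"

definition run_pmf :: "(nat \<Rightarrow> nat pmf) \<Rightarrow> nat pmf \<Rightarrow> nat \<Rightarrow> (nat \<times> (nat \<Rightarrow> nat)) pmf" where
  "run_pmf R p T = pair_pmf (R T) (arrivals p T)"

text \<open>Myopic vanishing regret (O-constant uniform over the conditioning value z).\<close>
definition myopic_vanishing_regret :: "nat \<Rightarrow> nat \<Rightarrow> (nat \<Rightarrow> nat \<Rightarrow> real) \<Rightarrow> (nat \<Rightarrow> nat set) \<Rightarrow> nat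
     \<Rightarrow> nat pmf \<Rightarrow> (nat \<Rightarrow> nat \<Rightarrow> real \<Rightarrow> real) \<Rightarrow> (nat \<Rightarrow> nat pmf)
     \<Rightarrow> (nat \<Rightarrow> nat \<Rightarrow> (nat \<Rightarrow> nat) \<Rightarrow> nat \<Rightarrow> nat option) \<Rightarrow> bool" where
  "myopic_vanishing_regret m n c S K p g R pol \<longleftrightarrow>
     (\<exists>\<alpha>::real. 0 \<le> \<alpha> \<and> \<alpha> < 1 \<and> (\<exists>C::real. \<exists>T0::nat. \<forall>T\<ge>T0. K dvd T \<longrightarrow>
        (\<forall>k\<in>{1..K}. \<forall>z::nat \<Rightarrow> nat.
           let E = {(r, \<omega>). \<forall>i<m. Zres (pol T r \<omega>) i ((k - 1) * (T div K)) = z i} in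
           set_pmf (run_pmf R p T) \<inter> E \<noteq> {} \<longrightarrow>
           measure_pmf.expectation (cond_pmf (run_pmf R p T) E)
             (\<lambda>(r, \<omega>). Vpol_epoch m c g K T k \<omega> (pol T r \<omega>) - Vmyo m n c S g K T k \<omega> z)
           \<le> C * real T powr \<alpha>)))"

end

theory Submission
  imports Defs "HOL-Library.Landau_Symbols"
begin

text \<open>Take one resource, one arrival type that arrives in every period, zero assignment costs
  and two epochs of length e, with full utilisation as the epoch-1 target (deviation cost 1 - x)
  and zero utilisation as the epoch-2 target (deviation cost 2 x). If Z1 and Z2 count
  the assignments up to the end of epochs 1 and 2, a policy pays e - Z1 + 2 Z2 \<ge> e + Z1,
  whereas rejecting everything costs e. In epoch 1 the myopic optimum is 0 and the policy pays
  e - Z1, so myopic vanishing regret forces E Z1 \<ge> e - o(T): the assignments that are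
  myopically right in epoch 1 still count in the cumulative epoch-2 utilisation, and the regret
  is at least E Z1 = \<Omega>(T).\<close>

lemma Zres_le: "Zres a i t \<le> t"
proof -
  have "Zres a i t \<le> card {1..t}" unfolding Zres_def by (rule card_mono) auto
  then show ?thesis by simp
qed

lemma Zres_mono: "t \<le> t' \<Longrightarrow> Zres a i t \<le> Zres a i t'"
  unfolding Zres_def by (rule card_mono) auto

lemma Zres_0 [simp]: "Zres a i 0 = 0"
  unfolding Zres_def by simp

lemma Lam_le: "Lam \<omega> j t1 t2 \<le> t2 - t1"
proof -
  have "Lam \<omega> j t1 t2 \<le> card {t1<..t2}" unfolding Lam_def by (rule card_mono) auto
  then show ?thesis by simp
qed

lemma Lam_const: "Lam (\<lambda>_. j) j t1 t2 = t2 - t1"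
proof -
  have "{\<tau> \<in> {t1<..t2}. j = j} = {t1<..t2}" by auto
  then show ?thesis by (simp only: Lam_def card_greaterThanAtMost)
qed

lemma acost_zero [simp]: "acost (\<lambda>_ _. 0) \<omega> a t1 t2 = 0"
  unfolding acost_def by (rule sum.neutral) (auto split: option.split)

lemma finite_funs_finite_support:
  assumes "finite A" "finite B"
  shows "finite {f. \<forall>x. f x \<noteq> d \<longrightarrow> x \<in> A \<and> f x \<in> B}"
proof (rule finite_subset)
  show "finite {f. \<forall>x. (x \<in> A \<longrightarrow> f x \<in> insert d B) \<and> (x \<notin> A \<longrightarrow> f x = d)}"
    using assms by (intro finite_set_of_finite_funs) auto
qed auto

lemma finite_nat_matrices_row_sum_le:
  "finite {y :: nat \<Rightarrow> nat \<Rightarrow> nat. (\<forall>j i. y j i \<noteq> 0 \<longrightarrow> j < n \<and> i < m) \<and> (\<forall>j<n. (\<Sum>i<m. y j i) \<le> b)}"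
    (is "finite ?Y")
proof (rule finite_subset)
  let ?rows = "{v :: nat \<Rightarrow> nat. \<forall>i. v i \<noteq> 0 \<longrightarrow> i \<in> {..<m} \<and> v i \<in> {..b}}"
  show "finite {y. \<forall>j. y j \<noteq> (\<lambda>_. 0) \<longrightarrow> j \<in> {..<n} \<and> y j \<in> ?rows}"
    by (intro finite_funs_finite_support) auto
  have entry_le: "y j i \<le> b" if "y \<in> ?Y" "y j i \<noteq> 0" for y j i
  proof -
    have "y j i \<le> (\<Sum>i'<m. y j i')" using that by (intro member_le_sum) auto
    then show ?thesis using that by fastforce
  qed
  show "?Y \<subseteq> {y. \<forall>j. y j \<noteq> (\<lambda>_. 0) \<longrightarrow> j \<in> {..<n} \<and> y j \<in> ?rows}"
    using entry_le by fastforce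
qed

lemma finite_off_feasible: "finite (off_feasible m n S K T \<omega>)"
proof (rule finite_subset)
  let ?M = "{y :: nat \<Rightarrow> nat \<Rightarrow> nat. (\<forall>j i. y j i \<noteq> 0 \<longrightarrow> j < n \<and> i < m) \<and> (\<forall>j<n. (\<Sum>i<m. y j i) \<le> T)}"
  show "finite {y. \<forall>k. y k \<noteq> (\<lambda>_ _. 0) \<longrightarrow> k \<in> {1..K} \<and> y k \<in> ?M}"
    by (intro finite_funs_finite_support finite_nat_matrices_row_sum_le) auto
  show "off_feasible m n S K T \<omega> \<subseteq> {y. \<forall>k. y k \<noteq> (\<lambda>_ _. 0) \<longrightarrow> k \<in> {1..K} \<and> y k \<in> ?M}"
  proof (intro subsetI CollectI allI impI)
    fix y k
    assume y: "y \<in> off_feasible m n S K T \<omega>" and "y k \<noteq> (\<lambda>_ _. 0)"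
    then obtain j i where "y k j i \<noteq> 0" by (auto simp: fun_eq_iff)
    with y have k: "k \<in> {1..K}" by (auto simp: off_feasible_def)
    have Lam_le_T: "Lam \<omega> j ((k - 1) * (T div K)) (k * (T div K)) \<le> T" for j
    proof -
      have "Lam \<omega> j ((k - 1) * (T div K)) (k * (T div K)) \<le> k * (T div K)"
        using Lam_le[of \<omega> j] by (meson diff_le_self le_trans)
      also have "\<dots> \<le> K * (T div K)" using k by simp
      also have "\<dots> \<le> T" by simp
      finally show ?thesis .
    qed
    have "\<forall>j<n. (\<Sum>i<m. y k j i) \<le> Lam \<omega> j ((k - 1) * (T div K)) (k * (T div K))"
      using y k unfolding off_feasible_def by blast
    with y have "y k \<in> ?M" unfolding off_feasible_def using Lam_le_T by (blast intro: le_trans)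
    with k show "k \<in> {1..K} \<and> y k \<in> ?M" ..
  qed
qed

lemma Voff_le_off_cost:
  "y \<in> off_feasible m n S K T \<omega> \<Longrightarrow> Voff m n c S g K T \<omega> \<le> off_cost m n c g K T y"
  unfolding Voff_def using finite_off_feasible by (intro Min_le) auto

lemma Vmyo_le:
  assumes "\<forall>j i. y j i \<noteq> 0 \<longrightarrow> j < n \<and> i < m \<and> i \<in> S j"
    and "\<forall>j<n. (\<Sum>i<m. y j i) \<le> Lam \<omega> j ((k - 1) * (T div K)) (k * (T div K))"
  shows "Vmyo m n c S g K T k \<omega> z \<le> (\<Sum>j<n. \<Sum>i<m. c j i * real (y j i))
           + real (k * (T div K)) * (\<Sum>i<m. g k i ((real (z i) + real (\<Sum>j<n. y j i)) / real (k * (T div K))))"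
proof -
  let ?Y = "{y. (\<forall>j i. y j i \<noteq> 0 \<longrightarrow> j < n \<and> i < m \<and> i \<in> S j) \<and>
                (\<forall>j<n. (\<Sum>i<m. y j i) \<le> Lam \<omega> j ((k - 1) * (T div K)) (k * (T div K)))}"
  have "?Y \<subseteq> {y. (\<forall>j i. y j i \<noteq> 0 \<longrightarrow> j < n \<and> i < m) \<and> (\<forall>j<n. (\<Sum>i<m. y j i) \<le> k * (T div K))}"
    using le_trans[OF _ le_trans[OF Lam_le diff_le_self]] by blast
  then have "finite ?Y" using finite_nat_matrices_row_sum_le by (rule finite_subset)
  then show ?thesis unfolding Vmyo_def using assms by (intro Min_le) auto
qed

lemma powr_le_linear_eventually:
  fixes \<alpha> C \<epsilon> :: real
  assumes "\<alpha> < 1" "0 < \<epsilon>"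
  shows "\<forall>\<^sub>F T in sequentially. C * real T powr \<alpha> \<le> \<epsilon> * real T"
proof -
  have "(\<lambda>T. real T powr \<alpha>) \<in> o(\<lambda>T. real T powr 1)"
    using assms(1) by (intro powr_smallo_iff[THEN iffD2] filterlim_real_sequentially) auto
  then have "\<forall>\<^sub>F T in sequentially. real T powr \<alpha> \<le> \<epsilon> / (\<bar>C\<bar> + 1) * real T"
    using assms(2) by (auto dest!: landau_o.smallD[where c = "\<epsilon> / (\<bar>C\<bar> + 1)"] elim!: eventually_mono)
  then show ?thesis
  proof eventually_elim
    case (elim T)
    have "C * real T powr \<alpha> \<le> \<bar>C\<bar> * (\<epsilon> / (\<bar>C\<bar> + 1) * real T)"
      using elim by (intro mult_mono) auto
    also have "\<dots> \<le> \<epsilon> * real T"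
      using assms(2) by (simp add: field_simps)
    finally show ?case .
  qed
qed

lemma cond_pmf_UNIV: "cond_pmf p UNIV = p"
  by (rule pmf_eqI) (simp add: pmf_cond set_pmf_not_empty)

lemma myopic_regret_first_epoch_sublinear:
  assumes "myopic_vanishing_regret m n c S K p g R pol" "1 \<le> K" "0 < \<epsilon>"
  shows "\<forall>\<^sub>F T in sequentially. K dvd T \<longrightarrow>
           measure_pmf.expectation (run_pmf R p T)
             (\<lambda>(r, \<omega>). Vpol_epoch m c g K T 1 \<omega> (pol T r \<omega>) - Vmyo m n c S g K T 1 \<omega> (\<lambda>_. 0))
           \<le> \<epsilon> * real T"
proof -
  obtain \<alpha> C T0 where "\<alpha> < 1" and bound: "\<forall>T\<ge>T0. K dvd T \<longrightarrow> (\<forall>k\<in>{1..K}. \<forall>z::nat \<Rightarrow> nat.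
           let E = {(r, \<omega>). \<forall>i<m. Zres (pol T r \<omega>) i ((k - 1) * (T div K)) = z i} in
           set_pmf (run_pmf R p T) \<inter> E \<noteq> {} \<longrightarrow>
           measure_pmf.expectation (cond_pmf (run_pmf R p T) E)
             (\<lambda>(r, \<omega>). Vpol_epoch m c g K T k \<omega> (pol T r \<omega>) - Vmyo m n c S g K T k \<omega> z)
           \<le> C * real T powr \<alpha>)"
    using assms(1) unfolding myopic_vanishing_regret_def by blast
  \<comment> \<open>In the first epoch the conditioning event is certain, since nothing has been assigned yet.\<close>
  have first_epoch: "measure_pmf.expectation (run_pmf R p T)
             (\<lambda>(r, \<omega>). Vpol_epoch m c g K T 1 \<omega> (pol T r \<omega>) - Vmyo m n c S g K T 1 \<omega> (\<lambda>_. 0))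
           \<le> C * real T powr \<alpha>" if "T0 \<le> T" "K dvd T" for T
    using bound[rule_format, OF that, of 1 "\<lambda>_. 0"] assms(2)
    by (simp add: cond_pmf_UNIV set_pmf_not_empty)
  show ?thesis
    using eventually_ge_at_top[of T0] powr_le_linear_eventually[OF \<open>\<alpha> < 1\<close> assms(3), of C]
    by eventually_elim (use first_epoch in force)
qed

definition hard_target :: "nat \<Rightarrow> nat \<Rightarrow> real" where
  "hard_target k i = (if k = 1 then 1 else 0)"

definition hard_deviation :: "nat \<Rightarrow> nat \<Rightarrow> real \<Rightarrow> real" where
  "hard_deviation k i x = (if k = 1 then 1 - x else 2 * x)"

lemma hard_instance_valid:
  "valid_instance 1 1 (\<lambda>_ _. 0) (\<lambda>_. {0}) 2 (return_pmf 0) hard_target hard_deviation 2"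
proof -
  have "convex_on {0..1} (\<lambda>x::real. 1 - x)" "convex_on {0..1} (\<lambda>x::real. 2 * x)"
    by (auto simp: convex_on_def algebra_simps)
  moreover have "2-lipschitz_on {0..1} (\<lambda>x::real. 1 - x)" "2-lipschitz_on {0..1} (\<lambda>x::real. 2 * x)"
    by (auto intro!: lipschitz_onI simp: dist_real_def abs_if)
  moreover have "hard_deviation k i = (if k = 1 then (\<lambda>x. 1 - x) else (\<lambda>x. 2 * x))" for k i
    by (auto simp: hard_deviation_def)
  ultimately show ?thesis
    unfolding valid_instance_def by (auto simp: hard_target_def)
qed

lemma run_pmf_return_pmf_0: "run_pmf R (return_pmf 0) T = map_pmf (\<lambda>r. (r, \<lambda>_. 0)) (R T)"
  unfolding run_pmf_def arrivals_def
  by (simp add: Pi_pmf_return_pmf[of "{1..T}" 0 "\<lambda>_. 0"] pair_return_pmf2)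

lemma Vpol_hard:
  assumes "0 < e"
  shows "Vpol 1 (\<lambda>_ _. 0) hard_deviation 2 (2 * e) \<omega> a
           = real e - real (Zres a 0 e) + 2 * real (Zres a 0 (2 * e))"
proof -
  have "{1..2::nat} = {1, 2}" by auto
  with assms show ?thesis by (simp add: Vpol_def hard_deviation_def field_simps)
qed

lemma Vpol_epoch_hard:
  assumes "0 < e"
  shows "Vpol_epoch 1 (\<lambda>_ _. 0) hard_deviation 2 (2 * e) 1 \<omega> a = real e - real (Zres a 0 e)"
  using assms by (simp add: Vpol_epoch_def hard_deviation_def field_simps)

lemma Vmyo_hard_nonpos:
  assumes "0 < e"
  shows "Vmyo 1 1 (\<lambda>_ _. 0) (\<lambda>_. {0}) hard_deviation 2 (2 * e) 1 (\<lambda>_. 0) (\<lambda>_. 0) \<le> 0"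
proof -
  let ?all = "\<lambda>j i :: nat. if j = 0 \<and> i = 0 then e else 0"
  have "Vmyo 1 1 (\<lambda>_ _. 0) (\<lambda>_. {0}) hard_deviation 2 (2 * e) 1 (\<lambda>_. 0) (\<lambda>_. 0)
        \<le> real e * hard_deviation 1 0 (real e / real e)"
    by (rule order_trans[OF Vmyo_le[where y = ?all]]) (auto simp: Lam_const)
  also have "\<dots> = 0" using assms by (simp add: hard_deviation_def)
  finally show ?thesis .
qed

lemma Voff_hard_le:
  assumes "0 < e"
  shows "Voff 1 1 (\<lambda>_ _. 0) (\<lambda>_. {0}) hard_deviation 2 (2 * e) \<omega> \<le> real e"
proof -
  have "Voff 1 1 (\<lambda>_ _. 0) (\<lambda>_. {0}) hard_deviation 2 (2 * e) \<omega>
        \<le> off_cost 1 1 (\<lambda>_ _. 0) hard_deviation 2 (2 * e) (\<lambda>_ _ _. 0)"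
    by (rule Voff_le_off_cost) (simp add: off_feasible_def)
  also have "\<dots> = real e"
  proof -
    have "{1..2::nat} = {1, 2}" by auto
    with assms show ?thesis by (simp add: off_cost_def hard_deviation_def)
  qed
  finally show ?thesis .
qed

lemma hard_regret_ge_myopic_gap:
  assumes "0 < e"
  shows "real e - (Vpol_epoch 1 (\<lambda>_ _. 0) hard_deviation 2 (2 * e) 1 (\<lambda>_. 0) a
                    - Vmyo 1 1 (\<lambda>_ _. 0) (\<lambda>_. {0}) hard_deviation 2 (2 * e) 1 (\<lambda>_. 0) (\<lambda>_. 0))
         \<le> Vpol 1 (\<lambda>_ _. 0) hard_deviation 2 (2 * e) (\<lambda>_. 0) a
             - Voff 1 1 (\<lambda>_ _. 0) (\<lambda>_. {0}) hard_deviation 2 (2 * e) (\<lambda>_. 0)"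
proof -
  have "real (Zres a 0 e) \<le> real (Zres a 0 (2 * e))" by (simp add: Zres_mono)
  then show ?thesis
    unfolding Vpol_hard[OF assms] Vpol_epoch_hard[OF assms]
    using Vmyo_hard_nonpos[OF assms] Voff_hard_le[OF assms, of "\<lambda>_. 0"] by linarith
qed

lemma hard_expected_regret_ge:
  assumes "0 < e"
  shows "real e - measure_pmf.expectation (run_pmf R (return_pmf 0) (2 * e))
            (\<lambda>(r, \<omega>). Vpol_epoch 1 (\<lambda>_ _. 0) hard_deviation 2 (2 * e) 1 \<omega> (pol (2 * e) r \<omega>)
                       - Vmyo 1 1 (\<lambda>_ _. 0) (\<lambda>_. {0}) hard_deviation 2 (2 * e) 1 \<omega> (\<lambda>_. 0))
         \<le> measure_pmf.expectation (run_pmf R (return_pmf 0) (2 * e))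
            (\<lambda>(r, \<omega>). Vpol 1 (\<lambda>_ _. 0) hard_deviation 2 (2 * e) \<omega> (pol (2 * e) r \<omega>)
                       - Voff 1 1 (\<lambda>_ _. 0) (\<lambda>_. {0}) hard_deviation 2 (2 * e) \<omega>)"
proof -
  define Vm where "Vm = Vmyo 1 1 (\<lambda>_ _. 0) (\<lambda>_. {0}) hard_deviation 2 (2 * e) 1 (\<lambda>_. 0) (\<lambda>_. 0)"
  define Vo where "Vo = Voff 1 1 (\<lambda>_ _. 0) (\<lambda>_. {0}) hard_deviation 2 (2 * e) (\<lambda>_. 0)"
  define gap where
    "gap = (\<lambda>r. Vpol_epoch 1 (\<lambda>_ _. 0) hard_deviation 2 (2 * e) 1 (\<lambda>_. 0) (pol (2 * e) r (\<lambda>_. 0)) - Vm)"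
  define regret where
    "regret = (\<lambda>r. Vpol 1 (\<lambda>_ _. 0) hard_deviation 2 (2 * e) (\<lambda>_. 0) (pol (2 * e) r (\<lambda>_. 0)) - Vo)"
  have Z_le: "real (Zres a 0 t) \<le> real t" for a t using Zres_le by simp
  have "\<bar>gap r\<bar> \<le> real e + \<bar>Vm\<bar>" for r
    using Z_le[of "pol (2 * e) r (\<lambda>_. 0)" e] unfolding gap_def Vpol_epoch_hard[OF assms] by linarith
  then have int_gap: "integrable (R (2 * e)) gap"
    by (intro measure_pmf.integrable_const_bound[where B = "real e + \<bar>Vm\<bar>"]) auto
  have "\<bar>regret r\<bar> \<le> 5 * real e + \<bar>Vo\<bar>" for r
    using Z_le[of "pol (2 * e) r (\<lambda>_. 0)" e] Z_le[of "pol (2 * e) r (\<lambda>_. 0)" "2 * e"]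
    unfolding regret_def Vpol_hard[OF assms] by linarith
  then have int_regret: "integrable (R (2 * e)) regret"
    by (intro measure_pmf.integrable_const_bound[where B = "5 * real e + \<bar>Vo\<bar>"]) auto
  have gap_le_regret: "real e - gap r \<le> regret r" for r
    unfolding gap_def regret_def Vm_def Vo_def by (rule hard_regret_ge_myopic_gap[OF assms])
  have "real e - measure_pmf.expectation (R (2 * e)) gap = measure_pmf.expectation (R (2 * e)) (\<lambda>r. real e - gap r)"
    using int_gap by simp
  also have "\<dots> \<le> measure_pmf.expectation (R (2 * e)) regret"
    using gap_le_regret
    by (intro integral_mono Bochner_Integration.integrable_diff measure_pmf.integrable_const int_gap int_regret)
  finally show ?thesis
    by (simp add: run_pmf_return_pmf_0 gap_def regret_def Vm_def Vo_def)
qed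

lemma hard_instance_regret_linear:
  assumes "myopic_vanishing_regret 1 1 (\<lambda>_ _. 0) (\<lambda>_. {0}) 2 (return_pmf 0) hard_deviation R pol"
  shows "\<exists>c0>0. \<exists>T0. \<forall>T\<ge>T0. 2 dvd T \<longrightarrow>
           measure_pmf.expectation (run_pmf R (return_pmf 0) T)
             (\<lambda>(r, \<omega>). Vpol 1 (\<lambda>_ _. 0) hard_deviation 2 T \<omega> (pol T r \<omega>)
                        - Voff 1 1 (\<lambda>_ _. 0) (\<lambda>_. {0}) hard_deviation 2 T \<omega>)
           \<ge> c0 * real T"
proof -
  let ?regret = "\<lambda>T. measure_pmf.expectation (run_pmf R (return_pmf 0) T)
    (\<lambda>(r, \<omega>). Vpol 1 (\<lambda>_ _. 0) hard_deviation 2 T \<omega> (pol T r \<omega>)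
               - Voff 1 1 (\<lambda>_ _. 0) (\<lambda>_. {0}) hard_deviation 2 T \<omega>)"
  let ?gap = "\<lambda>T. measure_pmf.expectation (run_pmf R (return_pmf 0) T)
    (\<lambda>(r, \<omega>). Vpol_epoch 1 (\<lambda>_ _. 0) hard_deviation 2 T 1 \<omega> (pol T r \<omega>)
               - Vmyo 1 1 (\<lambda>_ _. 0) (\<lambda>_. {0}) hard_deviation 2 T 1 \<omega> (\<lambda>_. 0))"
  have "\<forall>\<^sub>F T in sequentially. 2 dvd T \<longrightarrow> ?gap T \<le> 1 / 4 * real T"
    by (rule myopic_regret_first_epoch_sublinear[OF assms]) auto
  then have "\<forall>\<^sub>F T in sequentially. 2 dvd T \<longrightarrow> 0 < T \<and> ?gap T \<le> 1 / 4 * real T"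
    using eventually_gt_at_top[of 0] by eventually_elim auto
  then obtain T0 where T0: "\<And>T. T0 \<le> T \<Longrightarrow> 2 dvd T \<Longrightarrow> 0 < T \<and> ?gap T \<le> 1 / 4 * real T"
    unfolding eventually_sequentially by blast
  show ?thesis
  proof (intro exI[of _ "1 / 4"] conjI exI[of _ T0] allI impI)
    fix T :: nat
    assume T: "T0 \<le> T" "2 dvd T"
    then obtain e where T_eq: "T = 2 * e" by blast
    with T0[OF T] have "0 < e" "?gap (2 * e) \<le> real e / 2" by auto
    with hard_expected_regret_ge[of e R pol] show "1 / 4 * real T \<le> ?regret T"
      unfolding T_eq by simp
  qed simp
qed

theorem proposition1:
  shows "\<exists>(m::nat) (n::nat) (c::nat \<Rightarrow> nat \<Rightarrow> real) (S::nat \<Rightarrow> nat set) (K::nat) (p::nat pmf)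
            (\<rho>::nat \<Rightarrow> nat \<Rightarrow> real) (g::nat \<Rightarrow> nat \<Rightarrow> real \<Rightarrow> real) (L::real).
    valid_instance m n c S K p \<rho> g L \<and>
    (\<forall>(R::nat \<Rightarrow> nat pmf) (pol::nat \<Rightarrow> nat \<Rightarrow> (nat \<Rightarrow> nat) \<Rightarrow> nat \<Rightarrow> nat option).
       online_policy S pol \<and> myopic_vanishing_regret m n c S K p g R pol \<longrightarrow>
       (\<exists>c0::real. c0 > 0 \<and> (\<exists>T0::nat. \<forall>T\<ge>T0. K dvd T \<longrightarrow>
          measure_pmf.expectation (run_pmf R p T)
            (\<lambda>(r, \<omega>). Vpol m c g K T \<omega> (pol T r \<omega>) - Voff m n c S g K T \<omega>)
          \<ge> c0 * real T)))"
  using hard_instance_valid hard_instance_regret_linear by blast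

end
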